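(* Let $\mathcal{G}$ be a quantitative concurrent graph game with $F$-expanded game $\mathcal{G}^\star$. (1) If $P$ is a Nash equilibrium profile with set of winners $W$, then every transition of $\mathsf{outcome}(P)$ is safe for $W$. (2) Let $(u,W)$ be a state of $\mathcal{G}^\star$, considered as the initial state. If $P$ is a profile whose outcome (from $(u,W)$) remains in $V\times W$ and takes only transitions that are safe for $W$, then the second-strike profile $\overline{P}$ is a Nash equilibrium.
   Context: A quantitative concurrent graph game is a tuple $\mathcal{G}=\langle \Omega, V, \{\mathsf{Act}_\alpha\}_{\alpha\in\Omega}, v_0, \delta, \mathsf{cost}, F\rangle$: finite players $\Omega$, finite states $V$, finite action sets $\mathsf{Act}_\alpha$ (all enabled everywhere), initial state $v_0$, transition function $\delta: V\times\prod_\alpha\mathsf{Act}_\alpha\to V$, cost function giving each transition a vector $(\mathsf{cost}_\alpha)_\alpha\in\mathbb{N}^\Omega$, and target sets $F_\alpha\subseteq V$. $\mathsf{cost}_\alpha$ of an outcome (sequence of consecutive transitions) is the $\alpha$-cost accumulated until $F_\alpha$ is first visited, $\infty$ if never. Strategies map histories to actions; profiles induce outcomes; a profile is a Nash equilibrium (NE) if no player can strictly lower its own cost by unilaterally changing its strategy. $C_\alpha(u)=\max_\sigma\min_\tau\mathsf{cost}_\alpha(\mathsf{outcome}_u(\sigma,\tau))$ (max over strategies of the coalition $\Omega\setminus\{\alpha\}$, min over strategies of $\alpha$, outcome starting at $u$). The $F$-expanded game $\mathcal{G}^\star$ has states $V\times 2^\Omega$, initial state $(v_0,\emptyset)$, the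 same actions, transitions $\delta^\star((v,S),\vec a)=(\delta(v,\vec a),S\cup\{\alpha: v\in F_\alpha\})$, costs $\mathsf{cost}^\star_\alpha((v,S),\vec a)=\mathsf{cost}_\alpha(v,\vec a)$ if $\alpha\notin S$ and $0$ if $\alpha\in S$, and targets $F^\star_\alpha=\{(v,S):\alpha\in S\}$; strategies, outcomes and profiles of $\mathcal{G}$ and $\mathcal{G}^\star$ correspond bijectively. The set of winners of a profile is the set of players $\alpha$ whose target is visited along its outcome. A transition $(x,\vec a,y)$ (of $\mathcal{G}$ or $\mathcal{G}^\star$) is safe for $W\subseteq\Omega$ if for every $\alpha\in\Omega\setminus W$ and every action vector $\vec b$ obtained from $\vec a$ by possibly changing the action of Player $\alpha$, the resulting transition $(x,\vec b,z)$ satisfies $C_\alpha(z)=\infty$. Second-strike profile $\overline{P}$ of $P$ with outcome $\pi$: each player follows $P$ while others follow $\pi$; once a player $\alpha$ deviates and a state $v'$ off $\pi$ is reached, the others play from $v'$ a fixed memoryless coalition strategy guaranteeing $\mathsf{cost}_\alpha\ge C_\alpha(w)$ from every state $w$. *)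

theory Defs
  imports Main "HOL-Library.Extended_Nat"
begin

text \<open>Players are the elements of a finite type 'p (this is Omega), states the
elements of a finite type 'v (this is V).  All per-player action sets live in a
common ambient type 'a; Act G alpha is the action set of player alpha.\<close>

record ('p, 'v, 'a) cgame =
  Act   :: "'p \<Rightarrow> 'a set"
  delta :: "'v \<Rightarrow> ('p \<Rightarrow> 'a) \<Rightarrow> 'v"
  cst   :: "'v \<Rightarrow> ('p \<Rightarrow> 'a) \<Rightarrow> 'p \<Rightarrow> nat"
  tgt   :: "'p \<Rightarrow> 'v set"

definition wf_game :: "('p, 'v, 'a) cgame \<Rightarrow> bool" where
  "wf_game G \<longleftrightarrow> (\<forall>\<alpha>. finite (Act G \<alpha>) \<and> Act G \<alpha> \<noteq> {})"

text \<open>A history: a start state together with the list of action vectors played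
so far (the visited states are determined by delta).\<close>

type_synonym ('v, 'p, 'a) history = "'v \<times> ('p \<Rightarrow> 'a) list"
type_synonym ('v, 'p, 'a) strategy = "('v, 'p, 'a) history \<Rightarrow> 'a"
type_synonym ('v, 'p, 'a) profile = "'p \<Rightarrow> ('v, 'p, 'a) strategy"

definition hstate :: "('p, 'v, 'a) cgame \<Rightarrow> ('v, 'p, 'a) history \<Rightarrow> 'v" where
  "hstate G h = foldl (delta G) (fst h) (snd h)"

fun hist :: "('v, 'p, 'a) profile \<Rightarrow> 'v \<Rightarrow> nat \<Rightarrow> ('p \<Rightarrow> 'a) list" where
  "hist P u 0 = []"
| "hist P u (Suc n) = hist P u n @ [(\<lambda>\<alpha>. P \<alpha> (u, hist P u n))]"

definition oact :: "('v, 'p, 'a) profile \<Rightarrow> 'v \<Rightarrow> nat \<Rightarrow> ('p \<Rightarrow> 'a)" where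
  "oact P u n = (\<lambda>\<alpha>. P \<alpha> (u, hist P u n))"

definition ostate :: "('p, 'v, 'a) cgame \<Rightarrow> ('v, 'p, 'a) profile \<Rightarrow> 'v \<Rightarrow> nat \<Rightarrow> 'v" where
  "ostate G P u n = hstate G (u, hist P u n)"

text \<open>The n-th transition of the outcome of P from u is
  (ostate G P u n, oact P u n, ostate G P u (Suc n)).\<close>

definition ocost :: "('p, 'v, 'a) cgame \<Rightarrow> ('v, 'p, 'a) profile \<Rightarrow> 'v \<Rightarrow> 'p \<Rightarrow> enat" where
  "ocost G P u \<alpha> =
     (if \<exists>n. ostate G P u n \<in> tgt G \<alpha>
      then enat (\<Sum>i < (LEAST n. ostate G P u n \<in> tgt G \<alpha>).
                    cst G (ostate G P u i) (oact P u i) \<alpha>)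
      else \<infinity>)"

definition is_strategy :: "('p, 'v, 'a) cgame \<Rightarrow> 'p \<Rightarrow> ('v, 'p, 'a) strategy \<Rightarrow> bool" where
  "is_strategy G \<alpha> s \<longleftrightarrow> (\<forall>h. s h \<in> Act G \<alpha>)"

definition is_profile :: "('p, 'v, 'a) cgame \<Rightarrow> ('v, 'p, 'a) profile \<Rightarrow> bool" where
  "is_profile G P \<longleftrightarrow> (\<forall>\<alpha>. is_strategy G \<alpha> (P \<alpha>))"

definition nash :: "('p, 'v, 'a) cgame \<Rightarrow> 'v \<Rightarrow> ('v, 'p, 'a) profile \<Rightarrow> bool" where
  "nash G v0 P \<longleftrightarrow> is_profile G P \<and>
     (\<forall>\<alpha> \<sigma>. is_strategy G \<alpha> \<sigma> \<longrightarrow> ocost G P v0 \<alpha> \<le> ocost G (P(\<alpha> := \<sigma>)) v0 \<alpha>)"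

text \<open>C_alpha(u): sup over coalition strategies (profiles whose alpha-component is
ignored) of inf over strategies of alpha.\<close>

definition Cval :: "('p, 'v, 'a) cgame \<Rightarrow> 'p \<Rightarrow> 'v \<Rightarrow> enat" where
  "Cval G \<alpha> u = (SUP P \<in> {P. is_profile G P}. INF \<tau> \<in> {\<tau>. is_strategy G \<alpha> \<tau>}.
                    ocost G (P(\<alpha> := \<tau>)) u \<alpha>)"

definition winners :: "('p, 'v, 'a) cgame \<Rightarrow> ('v, 'p, 'a) profile \<Rightarrow> 'v \<Rightarrow> 'p set" where
  "winners G P v0 = {\<alpha>. \<exists>n. ostate G P v0 n \<in> tgt G \<alpha>}"

definition safe :: "('p, 'v, 'a) cgame \<Rightarrow> 'p set \<Rightarrow> 'v \<Rightarrow> ('p \<Rightarrow> 'a) \<Rightarrow> bool" where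
  "safe G W x a \<longleftrightarrow>
     (\<forall>\<alpha>. \<alpha> \<notin> W \<longrightarrow> (\<forall>b. (\<forall>\<beta>. \<beta> \<noteq> \<alpha> \<longrightarrow> b \<beta> = a \<beta>) \<longrightarrow> b \<alpha> \<in> Act G \<alpha> \<longrightarrow>
        Cval G \<alpha> (delta G x b) = \<infinity>))"

definition expand :: "('p, 'v, 'a) cgame \<Rightarrow> ('p, 'v \<times> 'p set, 'a) cgame" where
  "expand G = \<lparr> Act = Act G,
                delta = (\<lambda>(v, S) a. (delta G v a, S \<union> {\<alpha>. v \<in> tgt G \<alpha>})),
                cst = (\<lambda>(v, S) a \<alpha>. if \<alpha> \<in> S then 0 else cst G v a \<alpha>),
                tgt = (\<lambda>\<alpha>. {(v, S). \<alpha> \<in> S}) \<rparr>"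

text \<open>pun alpha is a memoryless coalition strategy (pun alpha beta w is the action of
beta at state w when punishing alpha) guaranteeing cost_alpha >= C_alpha(w)
from every state w.\<close>

definition punishing :: "('p, 'v, 'a) cgame \<Rightarrow> ('p \<Rightarrow> 'p \<Rightarrow> 'v \<Rightarrow> 'a) \<Rightarrow> bool" where
  "punishing G pun \<longleftrightarrow>
     (\<forall>\<alpha> \<beta> w. \<beta> \<noteq> \<alpha> \<longrightarrow> pun \<alpha> \<beta> w \<in> Act G \<beta>) \<and>
     (\<forall>\<alpha> w \<tau>. is_strategy G \<alpha> \<tau> \<longrightarrow>
        Cval G \<alpha> w \<le> ocost G ((\<lambda>\<beta> h. pun \<alpha> \<beta> (hstate G h))(\<alpha> := \<tau>)) w \<alpha>)"

text \<open>Q is a second-strike profile of P (initial state s0) w.r.t. the punishing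
strategies pun: along the outcome pi of P it plays P; once player alpha alone has
deviated from pi (first divergence at round k), every other player plays the
punishing strategy against alpha at the current state.\<close>

definition second_strike ::
  "('p, 'v, 'a) cgame \<Rightarrow> 'v \<Rightarrow> ('v, 'p, 'a) profile \<Rightarrow> ('p \<Rightarrow> 'p \<Rightarrow> 'v \<Rightarrow> 'a)
     \<Rightarrow> ('v, 'p, 'a) profile \<Rightarrow> bool" where
  "second_strike G s0 P pun Q \<longleftrightarrow>
     is_profile G Q \<and>
     (\<forall>n \<beta>. Q \<beta> (s0, hist P s0 n) = P \<beta> (s0, hist P s0 n)) \<and>
     (\<forall>k \<alpha> b rest \<beta>. (\<forall>\<gamma>. \<gamma> \<noteq> \<alpha> \<longrightarrow> b \<gamma> = oact P s0 k \<gamma>) \<longrightarrow> b \<alpha> \<noteq> oact P s0 k \<alpha> \<longrightarrow>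
        \<beta> \<noteq> \<alpha> \<longrightarrow>
        Q \<beta> (s0, hist P s0 k @ [b] @ rest) = pun \<alpha> \<beta> (hstate G (s0, hist P s0 k @ [b] @ rest)))"

end

theory Submission
  imports Defs
begin

text \<open>(1) If a losing player \<alpha> of a Nash equilibrium could reach a state z with
C_\<alpha>(z) < \<infinity> by changing only its own action, it would have a strategy that
reaches its target against the continuation of the equilibrium from z, and
switching to it after the current history would be a profitable deviation.
(2) In the expanded game the players of W have already won at the initial
state, so only a player \<alpha> \<notin> W can profit from deviating; it loses along the
outcome of P, and after its first deviation the state z reached has
C_\<alpha>(z) = \<infinity> by safety, so the punishing coalition keeps it from its target
forever.\<close>

lemma length_hist [simp]: "length (hist P s n) = n"
  by (induction n) auto

lemma hstate_Nil [simp]: "hstate G (s, []) = s"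
  by (simp add: hstate_def)

lemma hstate_append: "hstate G (s, xs @ ys) = hstate G (hstate G (s, xs), ys)"
  by (simp add: hstate_def)

lemma hstate_snoc: "hstate G (s, xs @ [b]) = delta G (hstate G (s, xs)) b"
  by (simp add: hstate_def)

lemma ocost_eq_infinity_iff: "ocost G P s \<alpha> = \<infinity> \<longleftrightarrow> (\<forall>n. ostate G P s n \<notin> tgt G \<alpha>)"
  by (auto simp: ocost_def)

lemma ocost_eq_0_if_start_in_tgt:
  assumes "s \<in> tgt G \<alpha>"
  shows "ocost G P s \<alpha> = 0"
proof -
  have start: "ostate G P s 0 \<in> tgt G \<alpha>"
    using assms by (simp add: ostate_def)
  then have "(LEAST n. ostate G P s n \<in> tgt G \<alpha>) = 0"
    by (rule Least_eq_0)
  with start show ?thesis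
    by (auto simp: ocost_def zero_enat_def)
qed

lemma hist_eq_if_agree_on_outcome:
  assumes "\<forall>k<m. \<forall>\<beta>. R \<beta> (s, hist P s k) = P \<beta> (s, hist P s k)"
  shows "\<forall>k\<le>m. hist R s k = hist P s k"
proof (intro allI impI)
  fix k
  assume "k \<le> m"
  then show "hist R s k = hist P s k"
  proof (induction k)
    case (Suc k)
    then have "hist R s k = hist P s k" by simp
    moreover have "(\<lambda>\<beta>. R \<beta> (s, hist P s k)) = (\<lambda>\<beta>. P \<beta> (s, hist P s k))"
      using assms Suc.prems by auto
    ultimately show ?case by simp
  qed simp
qed

lemma ostate_shift:
  assumes "hist R s m = h"
    and "\<forall>rest \<beta>. R \<beta> (s, h @ rest) = P \<beta> (hstate G (s, h), rest)"
  shows "ostate G R s (m + j) = ostate G P (hstate G (s, h)) j"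
proof -
  have "hist R s (m + j) = h @ hist P (hstate G (s, h)) j"
    by (induction j) (simp_all add: assms)
  then show ?thesis
    by (simp add: ostate_def hstate_append)
qed

text \<open>The start state of the residual history is irrelevant: the continuation is
determined by the actions appended to h.\<close>

definition residual :: "('v, 'p, 'a) strategy \<Rightarrow> 'v \<Rightarrow> ('p \<Rightarrow> 'a) list \<Rightarrow> ('v, 'p, 'a) strategy"
  where "residual \<sigma> s h = (\<lambda>h'. \<sigma> (s, h @ snd h'))"

lemma is_strategy_residual: "is_strategy G \<alpha> \<sigma> \<Longrightarrow> is_strategy G \<alpha> (residual \<sigma> s h)"
  by (simp add: is_strategy_def residual_def)

lemma reach_tgt_if_Cval_finite:
  assumes "Cval G \<alpha> z \<noteq> \<infinity>" and "is_profile G P"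
  obtains \<tau> j where "is_strategy G \<alpha> \<tau>" and "ostate G (P(\<alpha> := \<tau>)) z j \<in> tgt G \<alpha>"
proof -
  have "(INF \<tau> \<in> {\<tau>. is_strategy G \<alpha> \<tau>}. ocost G (P(\<alpha> := \<tau>)) z \<alpha>) \<le> Cval G \<alpha> z"
    unfolding Cval_def using assms(2) by (intro SUP_upper) auto
  also have "\<dots> < \<infinity>"
    using assms(1) enat_ord_simps(4) by blast
  finally obtain \<tau> where "is_strategy G \<alpha> \<tau>" and "ocost G (P(\<alpha> := \<tau>)) z \<alpha> < \<infinity>"
    by (auto simp only: INF_less_iff mem_Collect_eq)
  then show thesis
    using that by (auto simp: ocost_eq_infinity_iff)
qed

lemma switch_after_history_reaches_tgt:
  assumes P_profile: "is_profile G P"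
    and b_others: "\<forall>\<beta>. \<beta> \<noteq> \<alpha> \<longrightarrow> b \<beta> = oact P v0 n \<beta>" and b_Act: "b \<alpha> \<in> Act G \<alpha>"
    and \<tau>: "is_strategy G \<alpha> \<tau>"
  defines "h \<equiv> hist P v0 n @ [b]"
  defines "z \<equiv> hstate G (v0, h)"
  assumes reach: "ostate G ((\<lambda>\<beta>. residual (P \<beta>) v0 h)(\<alpha> := \<tau>)) z j \<in> tgt G \<alpha>"
  obtains \<sigma> where "is_strategy G \<alpha> \<sigma>" and "ocost G (P(\<alpha> := \<sigma>)) v0 \<alpha> \<noteq> \<infinity>"
proof -
  define \<sigma> where "\<sigma> = (\<lambda>h'. if h' = (v0, hist P v0 n) then b \<alpha>
    else if \<exists>rest. h' = (v0, h @ rest) then \<tau> (z, drop (Suc n) (snd h')) else P \<alpha> h')"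
  have \<sigma>: "is_strategy G \<alpha> \<sigma>"
    using b_Act \<tau> P_profile by (simp add: \<sigma>_def is_strategy_def is_profile_def)
  define R where "R = P(\<alpha> := \<sigma>)"
  have agree: "\<forall>k<n. \<forall>\<beta>. R \<beta> (v0, hist P v0 k) = P \<beta> (v0, hist P v0 k)"
  proof (intro allI impI)
    fix k \<beta>
    assume "k < n"
    then have "hist P v0 k \<noteq> hist P v0 n" and "\<forall>rest. hist P v0 k \<noteq> h @ rest"
      by (auto simp: h_def dest!: arg_cong[of _ _ length])
    then show "R \<beta> (v0, hist P v0 k) = P \<beta> (v0, hist P v0 k)"
      by (simp add: R_def \<sigma>_def)
  qed
  have "hist R v0 n = hist P v0 n"
    using hist_eq_if_agree_on_outcome[OF agree] by blast
  moreover have "(\<lambda>\<beta>. R \<beta> (v0, hist P v0 n)) = b"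
  proof
    fix \<beta>
    show "R \<beta> (v0, hist P v0 n) = b \<beta>"
      using b_others by (cases "\<beta> = \<alpha>") (simp_all add: R_def \<sigma>_def oact_def)
  qed
  ultimately have "hist R v0 (Suc n) = h"
    by (simp add: h_def)
  moreover have "\<forall>rest \<beta>. R \<beta> (v0, h @ rest) = ((\<lambda>\<beta>. residual (P \<beta>) v0 h)(\<alpha> := \<tau>)) \<beta> (z, rest)"
  proof (intro allI)
    fix rest \<beta>
    have "h @ rest \<noteq> hist P v0 n" and "drop (Suc n) (h @ rest) = rest"
      by (simp_all add: h_def)
    then show "R \<beta> (v0, h @ rest) = ((\<lambda>\<beta>. residual (P \<beta>) v0 h)(\<alpha> := \<tau>)) \<beta> (z, rest)"
      by (simp add: R_def \<sigma>_def residual_def)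
  qed
  ultimately have "ostate G R v0 (Suc n + j) = ostate G ((\<lambda>\<beta>. residual (P \<beta>) v0 h)(\<alpha> := \<tau>)) z j"
    unfolding z_def by (rule ostate_shift)
  with reach have "ocost G R v0 \<alpha> \<noteq> \<infinity>"
    by (metis ocost_eq_infinity_iff)
  with \<sigma> show thesis
    using that unfolding R_def by blast
qed

lemma safe_outcome_if_nash:
  assumes nash: "nash G v0 P"
  shows "safe G (winners G P v0) (ostate G P v0 n) (oact P v0 n)"
  unfolding safe_def
proof (intro allI impI)
  fix \<alpha> b
  assume loser: "\<alpha> \<notin> winners G P v0"
    and b_others: "\<forall>\<beta>. \<beta> \<noteq> \<alpha> \<longrightarrow> b \<beta> = oact P v0 n \<beta>" and b_Act: "b \<alpha> \<in> Act G \<alpha>"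
  define h where "h = hist P v0 n @ [b]"
  have P_profile: "is_profile G P"
    using nash by (simp add: nash_def)
  then have residual_profile: "is_profile G (\<lambda>\<beta>. residual (P \<beta>) v0 h)"
    by (simp add: is_profile_def is_strategy_residual)
  show "Cval G \<alpha> (delta G (ostate G P v0 n) b) = \<infinity>"
  proof (rule ccontr)
    assume "Cval G \<alpha> (delta G (ostate G P v0 n) b) \<noteq> \<infinity>"
    then have "Cval G \<alpha> (hstate G (v0, h)) \<noteq> \<infinity>"
      by (simp add: h_def hstate_snoc ostate_def)
    then obtain \<tau> j where "is_strategy G \<alpha> \<tau>"
      and "ostate G ((\<lambda>\<beta>. residual (P \<beta>) v0 h)(\<alpha> := \<tau>)) (hstate G (v0, h)) j \<in> tgt G \<alpha>"
      using residual_profile by (rule reach_tgt_if_Cval_finite)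
    then obtain \<sigma> where \<sigma>: "is_strategy G \<alpha> \<sigma>" and "ocost G (P(\<alpha> := \<sigma>)) v0 \<alpha> \<noteq> \<infinity>"
      using switch_after_history_reaches_tgt[OF P_profile b_others b_Act] unfolding h_def by blast
    moreover have "ocost G P v0 \<alpha> = \<infinity>"
      using loser by (simp add: ocost_eq_infinity_iff winners_def)
    moreover have "ocost G P v0 \<alpha> \<le> ocost G (P(\<alpha> := \<sigma>)) v0 \<alpha>"
      using nash \<sigma> by (simp add: nash_def)
    ultimately show False by simp
  qed
qed

lemma first_deviation_cases:
  assumes "\<forall>n \<beta>. Q \<beta> (s, hist P s n) = P \<beta> (s, hist P s n)"
  obtains "\<forall>n. hist (Q(\<alpha> := \<sigma>)) s n = hist P s n"
  | k where "\<forall>i\<le>k. hist (Q(\<alpha> := \<sigma>)) s i = hist P s i"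
      and "\<sigma> (s, hist P s k) \<noteq> P \<alpha> (s, hist P s k)"
proof (cases "\<forall>k. \<sigma> (s, hist P s k) = P \<alpha> (s, hist P s k)")
  case True
  have "hist (Q(\<alpha> := \<sigma>)) s n = hist P s n" for n
  proof -
    have agree: "\<forall>k<n. \<forall>\<beta>. (Q(\<alpha> := \<sigma>)) \<beta> (s, hist P s k) = P \<beta> (s, hist P s k)"
      using True assms by simp
    show ?thesis
      using hist_eq_if_agree_on_outcome[OF agree] by blast
  qed
  then show thesis
    using that(1) by blast
next
  case False
  define k where "k = (LEAST k. \<sigma> (s, hist P s k) \<noteq> P \<alpha> (s, hist P s k))"
  have deviates: "\<sigma> (s, hist P s k) \<noteq> P \<alpha> (s, hist P s k)"
    using False unfolding k_def by (metis (mono_tags, lifting) LeastI)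
  have agree: "\<forall>i<k. \<forall>\<beta>. (Q(\<alpha> := \<sigma>)) \<beta> (s, hist P s i) = P \<beta> (s, hist P s i)"
    using not_less_Least[of _ "\<lambda>k. \<sigma> (s, hist P s k) \<noteq> P \<alpha> (s, hist P s k)"] assms
    unfolding k_def by auto
  show thesis
    using that(2)[OF hist_eq_if_agree_on_outcome[OF agree] deviates] .
qed

lemma second_strike_after_deviation:
  assumes ss: "second_strike G s P pun Q"
    and hist_k: "hist (Q(\<alpha> := \<sigma>)) s k = hist P s k"
    and deviates: "\<sigma> (s, hist P s k) \<noteq> P \<alpha> (s, hist P s k)"
  defines "b \<equiv> (oact P s k)(\<alpha> := \<sigma> (s, hist P s k))"
  defines "h \<equiv> hist P s k @ [b]"
  shows "hist (Q(\<alpha> := \<sigma>)) s (Suc k) = h"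
    and "\<forall>rest \<beta>. (Q(\<alpha> := \<sigma>)) \<beta> (s, h @ rest)
           = ((\<lambda>\<beta> h'. pun \<alpha> \<beta> (hstate G h'))(\<alpha> := residual \<sigma> s h)) \<beta> (hstate G (s, h), rest)"
proof -
  have "\<forall>n \<beta>. Q \<beta> (s, hist P s n) = P \<beta> (s, hist P s n)"
    using ss by (simp add: second_strike_def)
  then show "hist (Q(\<alpha> := \<sigma>)) s (Suc k) = h"
    using hist_k by (auto simp: h_def b_def oact_def)
  have "Q \<beta> (s, h @ rest) = pun \<alpha> \<beta> (hstate G (s, h @ rest))" if "\<beta> \<noteq> \<alpha>" for \<beta> rest
    using ss that deviates unfolding second_strike_def h_def b_def by (simp add: oact_def)
  then show "\<forall>rest \<beta>. (Q(\<alpha> := \<sigma>)) \<beta> (s, h @ rest)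
           = ((\<lambda>\<beta> h'. pun \<alpha> \<beta> (hstate G h'))(\<alpha> := residual \<sigma> s h)) \<beta> (hstate G (s, h), rest)"
    by (simp add: residual_def hstate_append)
qed

lemma Cval_eq_infinity_if_safe:
  assumes "safe G W x a" and "\<alpha> \<notin> W" and "c \<in> Act G \<alpha>"
  shows "Cval G \<alpha> (delta G x (a(\<alpha> := c))) = \<infinity>"
proof -
  have "\<forall>\<beta>. \<beta> \<noteq> \<alpha> \<longrightarrow> (a(\<alpha> := c)) \<beta> = a \<beta>" and "(a(\<alpha> := c)) \<alpha> \<in> Act G \<alpha>"
    using assms(3) by simp_all
  then show ?thesis
    using assms(1,2) unfolding safe_def by blast
qed

lemma punishing_never_reaches_tgt:
  assumes "punishing G pun" and "Cval G \<alpha> w = \<infinity>" and "is_strategy G \<alpha> \<tau>"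
  shows "ostate G ((\<lambda>\<beta> h. pun \<alpha> \<beta> (hstate G h))(\<alpha> := \<tau>)) w j \<notin> tgt G \<alpha>"
proof -
  have "Cval G \<alpha> w \<le> ocost G ((\<lambda>\<beta> h. pun \<alpha> \<beta> (hstate G h))(\<alpha> := \<tau>)) w \<alpha>"
    using assms(1,3) unfolding punishing_def by blast
  with assms(2) show ?thesis
    by (simp add: ocost_eq_infinity_iff)
qed

lemma second_strike_deviation_never_reaches_tgt:
  assumes loses: "\<forall>n. ostate G P s n \<notin> tgt G \<alpha>" and "\<alpha> \<notin> W"
    and safe: "\<forall>n. safe G W (ostate G P s n) (oact P s n)"
    and pun: "punishing G pun" and ss: "second_strike G s P pun Q"
    and \<sigma>: "is_strategy G \<alpha> \<sigma>"
  shows "ostate G (Q(\<alpha> := \<sigma>)) s n \<notin> tgt G \<alpha>"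
proof -
  have "\<forall>n \<beta>. Q \<beta> (s, hist P s n) = P \<beta> (s, hist P s n)"
    using ss by (simp add: second_strike_def)
  then consider "\<forall>n. hist (Q(\<alpha> := \<sigma>)) s n = hist P s n"
    | k where "\<forall>i\<le>k. hist (Q(\<alpha> := \<sigma>)) s i = hist P s i"
        and "\<sigma> (s, hist P s k) \<noteq> P \<alpha> (s, hist P s k)"
    by (rule first_deviation_cases)
  then show ?thesis
  proof cases
    case 1
    then show ?thesis
      using loses by (simp add: ostate_def)
  next
    case (2 k)
    define b where "b = (oact P s k)(\<alpha> := \<sigma> (s, hist P s k))"
    define h where "h = hist P s k @ [b]"
    have "\<sigma> (s, hist P s k) \<in> Act G \<alpha>"
      using \<sigma> by (simp add: is_strategy_def)
    then have "Cval G \<alpha> (delta G (ostate G P s k) b) = \<infinity>"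
      unfolding b_def by (rule Cval_eq_infinity_if_safe[OF safe[THEN spec] \<open>\<alpha> \<notin> W\<close>])
    then have "Cval G \<alpha> (hstate G (s, h)) = \<infinity>"
      by (simp add: h_def hstate_snoc ostate_def)
    then have punished: "ostate G ((\<lambda>\<beta> h'. pun \<alpha> \<beta> (hstate G h'))(\<alpha> := residual \<sigma> s h))
        (hstate G (s, h)) j \<notin> tgt G \<alpha>" for j
      using punishing_never_reaches_tgt[OF pun _ is_strategy_residual[OF \<sigma>]] by blast
    show ?thesis
    proof (cases "n \<le> k")
      case True
      then show ?thesis
        using 2(1) loses by (simp add: ostate_def)
    next
      case False
      then obtain j where n: "n = Suc k + j"
        by (metis add_Suc less_imp_Suc_add not_le)
      have "hist (Q(\<alpha> := \<sigma>)) s k = hist P s k"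
        using 2(1) by simp
      note after = second_strike_after_deviation[OF ss this 2(2), folded b_def h_def]
      show ?thesis
        unfolding n using ostate_shift[OF after, of j] punished[of j] by (simp only: not_False_eq_True)
    qed
  qed
qed

lemma nash_if_second_strike:
  assumes losers_lose: "\<forall>\<alpha> n. \<alpha> \<notin> W \<longrightarrow> ostate G P s n \<notin> tgt G \<alpha>"
    and winners_won: "\<forall>\<alpha>\<in>W. s \<in> tgt G \<alpha>"
    and safe: "\<forall>n. safe G W (ostate G P s n) (oact P s n)"
    and pun: "punishing G pun" and ss: "second_strike G s P pun Q"
  shows "nash G s Q"
  unfolding nash_def
proof (intro conjI allI impI)
  show "is_profile G Q"
    using ss by (simp add: second_strike_def)
  fix \<alpha> \<sigma>
  assume \<sigma>: "is_strategy G \<alpha> \<sigma>"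
  show "ocost G Q s \<alpha> \<le> ocost G (Q(\<alpha> := \<sigma>)) s \<alpha>"
  proof (cases "\<alpha> \<in> W")
    case True
    then show ?thesis
      using winners_won by (simp add: ocost_eq_0_if_start_in_tgt)
  next
    case False
    then have "\<forall>n. ostate G P s n \<notin> tgt G \<alpha>"
      using losers_lose by blast
    then have "ostate G (Q(\<alpha> := \<sigma>)) s n \<notin> tgt G \<alpha>" for n
      using second_strike_deviation_never_reaches_tgt[OF _ False safe pun ss \<sigma>] by blast
    then have "ocost G (Q(\<alpha> := \<sigma>)) s \<alpha> = \<infinity>"
      by (simp add: ocost_eq_infinity_iff)
    then show ?thesis
      by simp
  qed
qed

lemma tgt_expand: "tgt (expand G) \<alpha> = {(v, S). \<alpha> \<in> S}"
  by (simp add: expand_def)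

theorem lemma2:
  fixes G :: "('p::finite, 'v::finite, 'a) cgame" and v0 :: 'v
  assumes "wf_game G"
  shows "(\<forall>P W. nash G v0 P \<and> W = winners G P v0 \<longrightarrow>
            (\<forall>n. safe G W (ostate G P v0 n) (oact P v0 n)))
       \<and> (\<forall>u W P pun Q.
            is_profile (expand G) P \<and>
            (\<forall>n. snd (ostate (expand G) P (u, W) n) = W) \<and>
            (\<forall>n. safe (expand G) W (ostate (expand G) P (u, W) n) (oact P (u, W) n)) \<and>
            punishing (expand G) pun \<and>
            second_strike (expand G) (u, W) P pun Q
            \<longrightarrow> nash (expand G) (u, W) Q)"
proof (intro conjI allI impI)
  fix P W n
  assume "nash G v0 P \<and> W = winners G P v0"
  then show "safe G W (ostate G P v0 n) (oact P v0 n)"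
    by (simp add: safe_outcome_if_nash)
next
  fix u W P pun Q
  assume "is_profile (expand G) P \<and>
            (\<forall>n. snd (ostate (expand G) P (u, W) n) = W) \<and>
            (\<forall>n. safe (expand G) W (ostate (expand G) P (u, W) n) (oact P (u, W) n)) \<and>
            punishing (expand G) pun \<and>
            second_strike (expand G) (u, W) P pun Q"
  then have stays: "\<forall>n. snd (ostate (expand G) P (u, W) n) = W"
    and safe: "\<forall>n. safe (expand G) W (ostate (expand G) P (u, W) n) (oact P (u, W) n)"
    and pun: "punishing (expand G) pun" and ss: "second_strike (expand G) (u, W) P pun Q"
    by blast+
  have "\<forall>\<alpha> n. \<alpha> \<notin> W \<longrightarrow> ostate (expand G) P (u, W) n \<notin> tgt (expand G) \<alpha>"
    using stays by (simp add: tgt_expand prod.case_eq_if)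
  moreover have "\<forall>\<alpha>\<in>W. (u, W) \<in> tgt (expand G) \<alpha>"
    by (simp add: tgt_expand)
  ultimately show "nash (expand G) (u, W) Q"
    using safe pun ss by (rule nash_if_second_strike)
qed

end
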